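(* Let $\mathcal{H}$ be a hierarchical generator with lineage $\mathcal{L}$. Among all absorbing hierarchical generators $\mathcal{H}_*$ whose lineage $\mathcal{L}_*$ contains $\mathcal{L}$, there is a least one $\tilde{\mathcal{H}}$, with lineage $\tilde{\mathcal{L}}$, in the sense that $\tilde{\mathcal{L}}\subset\mathcal{L}_*$ for every such $\mathcal{H}_*$. Moreover, with $\mathcal{R}=\tilde{\mathcal{L}}\setminus\mathcal{L}$: (i) every $\psi\in\mathcal{R}$ satisfies $\mathbb{I}(\psi)\subset\mathbb{I}(\mathcal{L}^{\ell_\psi})$; (ii) $\mathrm{depth}(\tilde{\mathcal{L}})=\mathrm{depth}(\mathcal{L})$; (iii) for every $\psi\in\mathcal{R}$ there is $k>0$ with $\mathcal{O}(\psi,k,\mathcal{H})\neq\emptyset$.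
   Context: Fix integers $d\ge1$, $n\ge2$, $m\ge2$; $s=n-1$, $p=m-1$. B-splines $\varphi^\ell_{\vec i}(\vec x)=\prod_kQ(n^\ell x_k-i_k)$ for $\ell\ge0$, $\vec i\in\mathbb{Z}^d$, $Q$ the uniform B-spline of order $m$ with knots $0,\dots,m$; $\mathfrak{B}$ the set of all of them, $\ell_\varphi$ the level; $\mathcal{B}^0=\{\varphi^0_{\vec i}:\vec i\in[-p:0]^d\}$. Children $\mathrm{ch}(\varphi^\ell_{\vec i})=\{\varphi^{\ell+1}_{\vec k}:n\vec i\le\vec k\le n\vec i+sm\}$, extended to sets by union. Cells $I^\ell_{\vec i}=\prod_k[i_kn^{-\ell},(i_k+1)n^{-\ell})$, cell children $\mathrm{ch}(I^\ell_{\vec i})=\{I^{\ell+1}_{\vec k}:n\vec i\le\vec k\le n\vec i+s\}$, $\mathrm{ch}^k$ iterated, $\mathrm{ch}^{-k}(I)=\{J:I\in\mathrm{ch}^k(J)\}$. Cell support $\mathbb{I}(\varphi^\ell_{\vec i})=\{I^\ell_{\vec k}:\vec i\le\vec k\le\vec i+p\}$, $\mathbb{I}^k(\varphi)=\mathrm{ch}^k(\mathbb{I}(\varphi))$ for $k\in\mathbb{Z}$, $\mathbb{B}^k(I)=\{\varphi\in\mathfrak{B}:I\in\mathbb{I}^{-k}(\varphi)\}$, all extended to sets by union; $\mathcal{O}(\psi,k,\mathcal{H})=\mathbb{B}^k(\mathbb{I}(\psi))\cap\mathcal{H}$. A lineage is a finite $\mathcal{L}\subset\mathfrak{B}$ with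 $\mathcal{L}\subset\mathcal{B}^0\cup\mathrm{ch}(\mathcal{L})$; its hierarchical generator is $\mathcal{H}=(\mathcal{B}^0\cup\mathrm{ch}(\mathcal{L}))\setminus\mathcal{L}$ (the lineage is uniquely determined by the generator). $\mathcal{L}^\ell$ is the set of level-$\ell$ elements of $\mathcal{L}$, and $\mathrm{depth}(\mathcal{L})=\min\{\ell:\mathcal{L}^\ell=\emptyset\}$. $\mathcal{H}$ is absorbing if there is no $\varphi\in\mathcal{H}$ with $\mathbb{I}(\varphi)\subset\mathbb{I}(\mathcal{L})$. *)

theory Defs
  imports Main
begin

text \<open>Index vectors in Z^d are functions 'd \<Rightarrow> int for a finite type 'd (d = CARD('d) \<ge> 1).
 A B-spline phi^l_i is identified with its pair (l, i); a cell I^l_i likewise with (l, i).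
 The parameters n (refinement factor) and m (spline order) are explicit arguments;
 s = n - 1 and p = m - 1.\<close>

type_synonym 'd bspl = "nat \<times> ('d \<Rightarrow> int)"
type_synonym 'd cell = "nat \<times> ('d \<Rightarrow> int)"

definition lvl :: "'d bspl \<Rightarrow> nat" where "lvl \<phi> = fst \<phi>"

definition B0 :: "nat \<Rightarrow> ('d::finite) bspl set" where
  "B0 m = {(0, i) | i. \<forall>j. - (int m - 1) \<le> i j \<and> i j \<le> 0}"

definition bch :: "nat \<Rightarrow> nat \<Rightarrow> ('d::finite) bspl \<Rightarrow> 'd bspl set" where
  "bch n m \<phi> = {(Suc (fst \<phi>), k) | k. \<forall>j. int n * snd \<phi> j \<le> k j
        \<and> k j \<le> int n * snd \<phi> j + (int n - 1) * int m}"

definition bchs :: "nat \<Rightarrow> nat \<Rightarrow> ('d::finite) bspl set \<Rightarrow> 'd bspl set" where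
  "bchs n m S = (\<Union>\<phi>\<in>S. bch n m \<phi>)"

definition cch :: "nat \<Rightarrow> ('d::finite) cell \<Rightarrow> 'd cell set" where
  "cch n I = {(Suc (fst I), k) | k. \<forall>j. int n * snd I j \<le> k j
        \<and> k j \<le> int n * snd I j + (int n - 1)}"

definition cchs :: "nat \<Rightarrow> ('d::finite) cell set \<Rightarrow> 'd cell set" where
  "cchs n S = (\<Union>I\<in>S. cch n I)"

fun cchk :: "nat \<Rightarrow> nat \<Rightarrow> ('d::finite) cell set \<Rightarrow> 'd cell set" where
  "cchk n 0 S = S"
| "cchk n (Suc k) S = cchs n (cchk n k S)"

definition cpark :: "nat \<Rightarrow> nat \<Rightarrow> ('d::finite) cell set \<Rightarrow> 'd cell set" where
  "cpark n k S = {J. \<exists>I\<in>S. I \<in> cchk n k {J}}"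

definition csupp :: "nat \<Rightarrow> ('d::finite) bspl \<Rightarrow> 'd cell set" where
  "csupp m \<phi> = {(fst \<phi>, k) | k. \<forall>j. snd \<phi> j \<le> k j \<and> k j \<le> snd \<phi> j + (int m - 1)}"

definition csupps :: "nat \<Rightarrow> ('d::finite) bspl set \<Rightarrow> 'd cell set" where
  "csupps m S = (\<Union>\<phi>\<in>S. csupp m \<phi>)"

definition csuppk :: "nat \<Rightarrow> nat \<Rightarrow> int \<Rightarrow> ('d::finite) bspl \<Rightarrow> 'd cell set" where
  "csuppk n m k \<phi> = (if 0 \<le> k then cchk n (nat k) (csupp m \<phi>)
                      else cpark n (nat (- k)) (csupp m \<phi>))"

definition Bk :: "nat \<Rightarrow> nat \<Rightarrow> int \<Rightarrow> ('d::finite) cell set \<Rightarrow> 'd bspl set" where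
  "Bk n m k S = {\<phi>. \<exists>I\<in>S. I \<in> csuppk n m (- k) \<phi>}"

definition overlap :: "nat \<Rightarrow> nat \<Rightarrow> ('d::finite) bspl \<Rightarrow> int \<Rightarrow> 'd bspl set \<Rightarrow> 'd bspl set" where
  "overlap n m \<psi> k H = Bk n m k (csupp m \<psi>) \<inter> H"

definition lineage :: "nat \<Rightarrow> nat \<Rightarrow> ('d::finite) bspl set \<Rightarrow> bool" where
  "lineage n m L \<longleftrightarrow> finite L \<and> L \<subseteq> B0 m \<union> bchs n m L"

definition hgen :: "nat \<Rightarrow> nat \<Rightarrow> ('d::finite) bspl set \<Rightarrow> 'd bspl set" where
  "hgen n m L = (B0 m \<union> bchs n m L) - L"

definition absorbing :: "nat \<Rightarrow> nat \<Rightarrow> ('d::finite) bspl set \<Rightarrow> 'd bspl set \<Rightarrow> bool" where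
  "absorbing n m H L \<longleftrightarrow> \<not> (\<exists>\<phi>\<in>H. csupp m \<phi> \<subseteq> csupps m L)"

definition levelset :: "('d::finite) bspl set \<Rightarrow> nat \<Rightarrow> 'd bspl set" where
  "levelset L l = {\<phi>\<in>L. lvl \<phi> = l}"

definition depth :: "('d::finite) bspl set \<Rightarrow> nat" where
  "depth L = (LEAST l. levelset L l = {})"

end

theory Submission
  imports Defs "HOL-Library.FuncSet"
begin

text \<open>The least absorbing extension of a lineage \<open>L\<close> is obtained by repeatedly adding every
  candidate (a level-0 B-spline or a child of an element already added) whose cell support lies
  in that of \<open>L\<close>; absorbing is then exactly the statement that no candidate is left over. Since
  cell supports are confined to single levels, every added function is covered by \<open>L\<close> on its own
  level, which keeps the depth unchanged. For the overlap property one descends from a cell of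
  \<open>L\<close> through children of members of \<open>L\<close>: by finiteness the descent must leave \<open>L\<close>, and it does
  so at an element of the hierarchical generator.\<close>

inductive_set absorbing_closure :: "nat \<Rightarrow> nat \<Rightarrow> ('d::finite) bspl set \<Rightarrow> 'd bspl set"
  for n m L where
  base: "\<phi> \<in> L \<Longrightarrow> \<phi> \<in> absorbing_closure n m L"
| level0: "\<lbrakk>\<phi> \<in> B0 m; csupp m \<phi> \<subseteq> csupps m L\<rbrakk> \<Longrightarrow> \<phi> \<in> absorbing_closure n m L"
| child: "\<lbrakk>\<psi> \<in> absorbing_closure n m L; \<phi> \<in> bch n m \<psi>; csupp m \<phi> \<subseteq> csupps m L\<rbrakk>
          \<Longrightarrow> \<phi> \<in> absorbing_closure n m L"

lemma csupp_self: "m \<ge> 1 \<Longrightarrow> \<phi> \<in> csupp m \<phi>"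
  by (cases \<phi>) (auto simp: csupp_def)

lemma fst_csupp: "I \<in> csupp m \<phi> \<Longrightarrow> fst I = fst \<phi>"
  by (auto simp: csupp_def)

lemma finite_csupp: "finite (csupp m (\<phi>::('d::finite) bspl))"
proof -
  let ?box = "{k::'d\<Rightarrow>int. \<forall>j. snd \<phi> j \<le> k j \<and> k j \<le> snd \<phi> j + (int m - 1)}"
  have "?box = PiE UNIV (\<lambda>j. {snd \<phi> j .. snd \<phi> j + (int m - 1)})"
    by (auto simp: PiE_UNIV_domain Pi_def)
  hence "finite ?box"
    by (simp add: finite_PiE)
  moreover have "csupp m \<phi> = Pair (fst \<phi>) ` ?box"
    by (auto simp: csupp_def)
  ultimately show ?thesis
    by simp
qed

lemma finite_csupps: "finite L \<Longrightarrow> finite (csupps m (L::('d::finite) bspl set))"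
  by (simp add: csupps_def finite_csupp)

lemma csupps_mono: "A \<subseteq> B \<Longrightarrow> csupps m A \<subseteq> csupps m B"
  by (auto simp: csupps_def)

lemma cchk_mono: "A \<subseteq> B \<Longrightarrow> cchk n k A \<subseteq> cchk n k B"
  by (induction k) (auto simp: cchs_def)

lemma cchk_cchs: "cchk n k (cchs n S) = cchs n (cchk n k S)"
  by (induction k) auto

text \<open>The child used is the one whose lower corner is the componentwise maximum of \<open>n\<close> times the
  corner of \<open>\<chi>\<close> and \<open>n j - p\<close>; it contains the cell \<open>n j\<close>, the lowest child cell of \<open>(l, j)\<close>.\<close>

lemma bch_contains_scaled_cell:
  assumes "n \<ge> 1" "m \<ge> 1" "(l, j) \<in> csupp m \<chi>"
  shows "\<exists>\<chi>' \<in> bch n m \<chi>. (Suc l, \<lambda>d. int n * j d) \<in> csupp m \<chi>'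
           \<and> (Suc l, \<lambda>d. int n * j d) \<in> cch n (l, j)"
proof -
  have l: "l = fst \<chi>" and j: "\<And>d. snd \<chi> d \<le> j d \<and> j d \<le> snd \<chi> d + (int m - 1)"
    using assms(3) by (auto simp: csupp_def)
  define k where "k = (\<lambda>d. max (int n * snd \<chi> d) (int n * j d - (int m - 1)))"
  have upper: "int n * j d \<le> int n * (snd \<chi> d + (int m - 1))" for d
    using j[of d] by (intro mult_left_mono) auto
  have "int n * j d - (int m - 1) \<le> int n * snd \<chi> d + (int n - 1) * int m" for d
    using upper[of d] assms(1) by (simp add: algebra_simps)
  moreover have "0 \<le> (int n - 1) * int m"
    using assms(1) by simp
  ultimately have "int n * snd \<chi> d \<le> k d \<and> k d \<le> int n * snd \<chi> d + (int n - 1) * int m" for d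
    by (auto simp: k_def)
  hence "(Suc (fst \<chi>), k) \<in> bch n m \<chi>"
    by (auto simp: bch_def)
  moreover have "int n * snd \<chi> d \<le> int n * j d" for d
    using j[of d] by (intro mult_left_mono) auto
  hence "(Suc l, \<lambda>d. int n * j d) \<in> csupp m (Suc (fst \<chi>), k)"
    using l assms(2) by (auto simp: csupp_def k_def)
  moreover have "(Suc l, \<lambda>d. int n * j d) \<in> cch n (l, j)"
    using assms(1) by (auto simp: cch_def)
  ultimately show ?thesis
    by blast
qed

lemma hgen_covers_descendant_cell:
  assumes "finite L" "n \<ge> 1" "m \<ge> 1" "\<chi> \<in> L" "I \<in> csupp m \<chi>"
  shows "\<exists>k\<ge>1. \<exists>\<phi>\<in>hgen n m L. \<exists>J\<in>csupp m \<phi>. J \<in> cchk n k {I}"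
  using assms(4,5)
proof (induction \<chi> arbitrary: I rule: measure_induct_rule[where f="\<lambda>\<chi>. Suc (Max (lvl ` L)) - lvl \<chi>"])
  case (less \<chi>)
  obtain l j where I: "I = (l, j)"
    by (cases I)
  let ?J = "(Suc l, \<lambda>d. int n * j d)"
  obtain \<chi>' where child: "\<chi>' \<in> bch n m \<chi>" and J: "?J \<in> csupp m \<chi>'" and "?J \<in> cch n I"
    using bch_contains_scaled_cell[OF assms(2,3)] less.prems I by blast
  hence J_child: "{?J} \<subseteq> cchs n {I}"
    by (auto simp: cchs_def)
  show ?case
  proof (cases "\<chi>' \<in> L")
    case False
    hence "\<chi>' \<in> hgen n m L"
      using child less.prems by (auto simp: hgen_def bchs_def)
    moreover have "?J \<in> cchk n 1 {I}"
      using J_child by simp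
    ultimately show ?thesis
      using J by blast
  next
    case True
    have "lvl \<chi>' = Suc (lvl \<chi>)"
      using child by (auto simp: bch_def lvl_def)
    moreover have "lvl \<chi>' \<le> Max (lvl ` L)"
      using True assms(1) by simp
    ultimately obtain k \<phi> J' where
      "k \<ge> 1" "\<phi> \<in> hgen n m L" "J' \<in> csupp m \<phi>" "J' \<in> cchk n k {?J}"
      using less.IH[OF _ True J] by fastforce
    moreover have "cchk n k {?J} \<subseteq> cchk n (Suc k) {I}"
      using cchk_mono[OF J_child, where n=n and k=k] by (simp add: cchk_cchs)
    ultimately show ?thesis
      by (intro exI[of _ "Suc k"]) auto
  qed
qed

lemma absorbing_closure_csupp:
  "\<psi> \<in> absorbing_closure n m L \<Longrightarrow> \<psi> \<notin> L \<Longrightarrow> csupp m \<psi> \<subseteq> csupps m L"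
  by (induction rule: absorbing_closure.induct) auto

lemma csupps_absorbing_closure: "csupps m (absorbing_closure n m L) = csupps m L"
  using absorbing_closure_csupp absorbing_closure.base
  by (fastforce simp: csupps_def)

lemma finite_absorbing_closure:
  assumes "finite L" "m \<ge> 1"
  shows "finite (absorbing_closure n m (L::('d::finite) bspl set))"
proof -
  have "absorbing_closure n m L \<subseteq> L \<union> csupps m L"
    using absorbing_closure_csupp csupp_self[OF assms(2)] by blast
  thus ?thesis
    using assms(1) finite_csupps by (meson finite_Un finite_subset)
qed

lemma lineage_absorbing_closure:
  assumes "lineage n m L" "m \<ge> 1"
  shows "lineage n m (absorbing_closure n m L)"
proof -
  have "bchs n m L \<subseteq> bchs n m (absorbing_closure n m L)"
    unfolding bchs_def using absorbing_closure.base by blast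
  moreover have "absorbing_closure n m L \<subseteq> L \<union> B0 m \<union> bchs n m (absorbing_closure n m L)"
    by (auto simp: bchs_def elim: absorbing_closure.cases)
  ultimately show ?thesis
    using assms finite_absorbing_closure by (fastforce simp: lineage_def)
qed

lemma absorbing_absorbing_closure:
  "absorbing n m (hgen n m (absorbing_closure n m L)) (absorbing_closure n m L)"
  unfolding absorbing_def hgen_def csupps_absorbing_closure
  using absorbing_closure.level0 absorbing_closure.child by (fastforce simp: bchs_def)

lemma absorbing_closure_least:
  assumes "L \<subseteq> Ls" "absorbing n m (hgen n m Ls) Ls"
  shows "absorbing_closure n m L \<subseteq> Ls"
proof
  fix \<phi> assume "\<phi> \<in> absorbing_closure n m L"
  thus "\<phi> \<in> Ls"
  proof (induction rule: absorbing_closure.induct)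
    case (level0 \<phi>)
    thus ?case
      using assms(2) csupps_mono[OF assms(1)] unfolding absorbing_def hgen_def by blast
  next
    case (child \<psi> \<phi>)
    hence "\<phi> \<in> bchs n m Ls"
      by (auto simp: bchs_def)
    thus ?case
      using child.hyps(3) assms(2) csupps_mono[OF assms(1)] unfolding absorbing_def hgen_def
      by blast
  qed (use assms(1) in blast)
qed

lemma absorbing_closure_csupp_levelset:
  assumes "\<psi> \<in> absorbing_closure n m L - L"
  shows "csupp m \<psi> \<subseteq> csupps m (levelset L (lvl \<psi>))"
proof
  fix I assume I: "I \<in> csupp m \<psi>"
  then obtain \<chi> where "\<chi> \<in> L" "I \<in> csupp m \<chi>"
    using assms absorbing_closure_csupp unfolding csupps_def by blast
  moreover have "lvl \<chi> = lvl \<psi>"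
    using I calculation(2) fst_csupp by (metis lvl_def)
  ultimately show "I \<in> csupps m (levelset L (lvl \<psi>))"
    unfolding csupps_def levelset_def by blast
qed

lemma depth_absorbing_closure:
  assumes "m \<ge> 1"
  shows "depth (absorbing_closure n m L) = depth L"
proof -
  have "levelset (absorbing_closure n m L) l = {} \<longleftrightarrow> levelset L l = {}" for l
  proof
    assume "levelset L l = {}"
    hence "csupps m (levelset L l) = {}"
      by (simp add: csupps_def)
    thus "levelset (absorbing_closure n m L) l = {}"
      using absorbing_closure_csupp_levelset csupp_self[OF assms] \<open>levelset L l = {}\<close>
      by (fastforce simp: levelset_def)
  qed (auto simp: levelset_def intro: absorbing_closure.base)
  thus ?thesis
    by (simp add: depth_def)
qed

lemma overlap_absorbing_closure:
  assumes "finite L" "n \<ge> 1" "m \<ge> 1" "\<psi> \<in> absorbing_closure n m L - L"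
  shows "\<exists>k::int. k > 0 \<and> overlap n m \<psi> k (hgen n m L) \<noteq> {}"
proof -
  obtain \<chi> where "\<chi> \<in> L" "\<psi> \<in> csupp m \<chi>"
    using assms(4) absorbing_closure_csupp csupp_self[OF assms(3)] unfolding csupps_def by blast
  then obtain k \<phi> J where k: "k \<ge> 1" "\<phi> \<in> hgen n m L" "J \<in> csupp m \<phi>" "J \<in> cchk n k {\<psi>}"
    using hgen_covers_descendant_cell[OF assms(1-3)] by blast
  hence "\<psi> \<in> csuppk n m (- int k) \<phi>"
    by (auto simp: csuppk_def cpark_def)
  hence "\<phi> \<in> overlap n m \<psi> (int k) (hgen n m L)"
    using k(2) csupp_self[OF assms(3)] unfolding overlap_def Bk_def by blast
  thus ?thesis
    using k(1) by (intro exI[of _ "int k"]) auto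
qed

theorem lemma6p10:
  fixes n m :: nat and L :: "('d::finite) bspl set"
  assumes "n \<ge> 2" and "m \<ge> 2"
    and "lineage n m L"
  shows "\<exists>Lt. lineage n m Lt \<and> L \<subseteq> Lt \<and> absorbing n m (hgen n m Lt) Lt
     \<and> (\<forall>Ls. lineage n m Ls \<and> L \<subseteq> Ls \<and> absorbing n m (hgen n m Ls) Ls \<longrightarrow> Lt \<subseteq> Ls)
     \<and> (\<forall>\<psi>\<in>Lt - L. csupp m \<psi> \<subseteq> csupps m (levelset L (lvl \<psi>)))
     \<and> depth Lt = depth L
     \<and> (\<forall>\<psi>\<in>Lt - L. \<exists>k::int. k > 0 \<and> overlap n m \<psi> k (hgen n m L) \<noteq> {})"
proof (intro exI[of _ "absorbing_closure n m L"] conjI allI impI ballI)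
  have n: "n \<ge> 1" and m: "m \<ge> 1" and fin: "finite L"
    using assms by (auto simp: lineage_def)
  show "lineage n m (absorbing_closure n m L)"
    using lineage_absorbing_closure[OF assms(3) m] .
  show "depth (absorbing_closure n m L) = depth L"
    using depth_absorbing_closure[OF m] .
  show "\<exists>k::int. k > 0 \<and> overlap n m \<psi> k (hgen n m L) \<noteq> {}"
    if "\<psi> \<in> absorbing_closure n m L - L" for \<psi>
    using overlap_absorbing_closure[OF fin n m that] .
  show "absorbing_closure n m L \<subseteq> Ls"
    if "lineage n m Ls \<and> L \<subseteq> Ls \<and> absorbing n m (hgen n m Ls) Ls" for Ls
    using absorbing_closure_least that by blast
  show "csupp m \<psi> \<subseteq> csupps m (levelset L (lvl \<psi>))"
    if "\<psi> \<in> absorbing_closure n m L - L" for \<psi>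
    using absorbing_closure_csupp_levelset[OF that] .
qed (auto intro: absorbing_closure.base absorbing_absorbing_closure)

end
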